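(* Let MACRO be run with threshold $\varepsilon>0$ and any subroutine, and assume that the discrepancy bounds are a pseudo-metric on time points, i.e. $M_{i,i}=0$, $M_{i,j}=M_{j,i}$ and $M_{i,j}\le M_{i,l}+M_{l,j}$ for all $i,j,l\ge 1$. For $n\ge 0$ and $\theta>0$ let $\mathcal{N}(M,n,\theta)$ denote the smallest cardinality of a set $S\subseteq\{1,\dots,n+1\}$ such that for every $t\in\{1,\dots,n+1\}$ there is $s\in S$ with $M_{t,s}\le\theta$ (this is the $\theta$-covering number of the conditional distributions $P_0,\dots,P_n$, where $P_t=\mathbb{P}(\cdot\mid z_1,\dots,z_t)$ is identified with time point $t+1$, with respect to $M$). Then for every $n$, $$\mathcal{N}(M,n,\varepsilon)\le N_n\le \mathcal{N}(M,n,\varepsilon/2).$$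
   Context: Setting: $z_1,z_2,\dots$ is a stochastic process with values in a measurable space $\mathcal{Z}$ and law $\mathbb{P}$; $\mathcal{H}$ is a set of hypotheses and $\ell:\mathcal{H}\times\mathcal{Z}\to[0,1]$ a loss, measurable in its second argument. For $t\ge 0$ the conditional risk is $R_t(h)=\mathbb{E}[\ell(h,z_{t+1})\mid z_1,\dots,z_t]$. The pairwise discrepancy between time points $i,j\ge1$ is $d_{i,j}=\sup_{h\in\mathcal{H}}|R_{i-1}(h)-R_{j-1}(h)|$. Discrepancy bounds: nonnegative random variables $M_{i,j}$ ($i,j\ge1$), $M_{i,j}$ being a function of $z_1,\dots,z_{\max(i,j)-1}$, with $d_{i,j}\le M_{i,j}$ almost surely. MACRO with threshold $\varepsilon>0$ and a learning subroutine: it maintains instances $S_1,\dots,S_N$ of the subroutine, instance $S_j$ having a creation time $\tau_j$; initially $N=0$. At each step $n=0,1,2,\dots$ (having observed $z_1,\dots,z_n$): (i) let $J=\{j\le N: M_{n+1,\tau_j}\le\varepsilon\}$; if $J=\emptyset$, create a new instance $S_{N+1}$ with $\tau_{N+1}=n+1$, set $N\leftarrow N+1$ and $J=\{N\}$; (ii) let $I_n=\arg\min_{j\in J}M_{n+1,\tau_j}$ (ties broken by a fixed rule) and output $h_n$, the current output hypothesis of $S_{I_n}$; (iii) observe $z_{n+1}$ and update every $S_j$, $j\in J$, with $z_{n+1}$. $N_n$ denotes the value of $N$ after step (i) of step $n$. *)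

theory Defs
  imports Complex_Main
begin

text \<open>One realization of the discrepancy bounds is a function
  M :: nat => nat => real, where M i j stands for M_{i,j} (time points i, j >= 1).
  The instance-creation behaviour of MACRO depends only on these values.\<close>

text \<open>macro_taus M eps n: list of creation times [tau_1, ..., tau_N] of the instances
  of MACRO after sub-step (i) of step n.  Its length is N_n.\<close>
fun macro_taus :: "(nat \<Rightarrow> nat \<Rightarrow> real) \<Rightarrow> real \<Rightarrow> nat \<Rightarrow> nat list" where
  "macro_taus M eps 0 = [1]"
| "macro_taus M eps (Suc n) =
     (let L = macro_taus M eps n in
      if (\<exists>\<tau>\<in>set L. M (Suc n + 1) \<tau> \<le> eps) then L else L @ [Suc n + 1])"

definition macro_N :: "(nat \<Rightarrow> nat \<Rightarrow> real) \<Rightarrow> real \<Rightarrow> nat \<Rightarrow> nat" where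
  "macro_N M eps n = length (macro_taus M eps n)"

definition covering_number :: "(nat \<Rightarrow> nat \<Rightarrow> real) \<Rightarrow> nat \<Rightarrow> real \<Rightarrow> nat" where
  "covering_number M n \<theta> =
     (LEAST k. \<exists>S. S \<subseteq> {1..n+1} \<and> (\<forall>t\<in>{1..n+1}. \<exists>s\<in>S. M t s \<le> \<theta>) \<and> card S = k)"

end

theory Submission
  imports Defs
begin

text \<open>MACRO opens a new instance exactly when the current time point is farther than \<open>eps\<close>
  from every creation time so far. Hence the creation times form an \<open>eps\<close>-cover of the time
  points seen that is \<open>eps\<close>-separated, which gives the lower bound by minimality of the
  covering number. For the upper bound, map each creation time to a point of a minimal
  \<open>eps/2\<close>-cover within distance \<open>eps/2\<close>; by the triangle inequality two separated points
  cannot share an image, so the map is injective.\<close>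

lemma macro_taus_subset: "set (macro_taus M eps n) \<subseteq> {1..n+1}"
  by (induction n) (auto simp: Let_def)

lemma distinct_macro_taus: "distinct (macro_taus M eps n)"
proof (induction n)
  case (Suc n)
  have "Suc n + 1 \<notin> set (macro_taus M eps n)"
    using macro_taus_subset[of M eps n] by auto
  with Suc.IH show ?case by (simp add: Let_def)
qed simp

lemma card_set_macro_taus: "card (set (macro_taus M eps n)) = macro_N M eps n"
  by (simp add: macro_N_def distinct_card distinct_macro_taus)

lemma macro_taus_covers:
  assumes "\<And>t. t \<ge> 1 \<Longrightarrow> M t t \<le> eps" and "t \<in> {1..n+1}"
  shows "\<exists>\<tau>\<in>set (macro_taus M eps n). M t \<tau> \<le> eps"
  using assms(2)
proof (induction n)
  case 0
  then show ?case using assms(1)[of 1] by simp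
next
  case (Suc n)
  show ?case
  proof (cases "t = Suc n + 1")
    case True
    then show ?thesis using assms(1)[of t] by (auto simp: Let_def)
  next
    case False
    with Suc show ?thesis by (auto simp: Let_def)
  qed
qed

text \<open>A later creation time is farther than \<open>eps\<close> from every earlier one, in this order of
  arguments; no symmetry of \<open>M\<close> is needed here.\<close>

lemma macro_taus_separated:
  assumes "a \<in> set (macro_taus M eps n)" "b \<in> set (macro_taus M eps n)" "a < b"
  shows "eps < M b a"
  using assms
proof (induction n)
  case (Suc n)
  let ?L = "macro_taus M eps n"
  have "b \<le> Suc n + 1" "a \<in> set ?L \<or> a = Suc n + 1"
    using Suc.prems macro_taus_subset[of M eps "Suc n"] by (auto simp: Let_def split: if_splits)
  then show ?case
    using Suc macro_taus_subset[of M eps n] by (auto simp: Let_def split: if_splits)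
qed simp

lemma covering_number_le_card:
  assumes "S \<subseteq> {1..n+1}" "\<forall>t\<in>{1..n+1}. \<exists>s\<in>S. M t s \<le> \<theta>"
  shows "covering_number M n \<theta> \<le> card S"
  unfolding covering_number_def by (rule Least_le) (use assms in blast)

lemma covering_number_attained:
  assumes "\<And>t. t \<ge> 1 \<Longrightarrow> M t t \<le> \<theta>"
  obtains S where "S \<subseteq> {1..n+1}" "\<forall>t\<in>{1..n+1}. \<exists>s\<in>S. M t s \<le> \<theta>"
    "card S = covering_number M n \<theta>"
proof -
  let ?P = "\<lambda>k. \<exists>S. S \<subseteq> {1..n+1} \<and> (\<forall>t\<in>{1..n+1}. \<exists>s\<in>S. M t s \<le> \<theta>) \<and> card S = k"
  have "?P (card {1..n+1})"
    by (rule exI[of _ "{1..n+1}"]) (use assms in force)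
  then have "?P (Least ?P)"
    by (rule LeastI[of ?P])
  then show ?thesis
    using that unfolding covering_number_def by blast
qed

lemma card_separated_le_covering_number:
  assumes sym: "\<And>i j. i \<ge> 1 \<Longrightarrow> j \<ge> 1 \<Longrightarrow> M i j = M j i"
    and tri: "\<And>i j l. i \<ge> 1 \<Longrightarrow> j \<ge> 1 \<Longrightarrow> l \<ge> 1 \<Longrightarrow> M i j \<le> M i l + M l j"
    and refl: "\<And>t. t \<ge> 1 \<Longrightarrow> M t t \<le> \<theta>"
    and P: "P \<subseteq> {1..n+1}"
    and separated: "\<And>a b. a \<in> P \<Longrightarrow> b \<in> P \<Longrightarrow> a \<noteq> b \<Longrightarrow> 2 * \<theta> < M a b"
  shows "card P \<le> covering_number M n \<theta>"
proof -
  obtain S where S: "S \<subseteq> {1..n+1}" "\<forall>t\<in>{1..n+1}. \<exists>s\<in>S. M t s \<le> \<theta>"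
    and card_S: "card S = covering_number M n \<theta>"
    using covering_number_attained[of M \<theta> n] refl by blast
  define f where "f p = (SOME s. s \<in> S \<and> M p s \<le> \<theta>)" for p
  have f: "f p \<in> S" "M p (f p) \<le> \<theta>" if "p \<in> P" for p
  proof -
    have "\<exists>s. s \<in> S \<and> M p s \<le> \<theta>" using S(2) P that by blast
    then show "f p \<in> S" "M p (f p) \<le> \<theta>"
      unfolding f_def by (metis (mono_tags, lifting) someI_ex)+
  qed
  have "inj_on f P"
  proof (rule inj_onI, rule ccontr)
    fix a b assume a: "a \<in> P" and b: "b \<in> P" and same: "f a = f b" and "a \<noteq> b"
    have "a \<ge> 1" "b \<ge> 1" "f a \<ge> 1" using a b f(1)[OF a] P S(1) by auto
    then have "M a b \<le> M a (f a) + M b (f b)"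
      using tri[of a b "f a"] sym[of "f a" b] same by simp
    also have "\<dots> \<le> 2 * \<theta>" using f(2)[OF a] f(2)[OF b] by simp
    finally show False using separated[OF a b \<open>a \<noteq> b\<close>] by simp
  qed
  then have "card P \<le> card S"
    by (rule card_inj_on_le) (use f(1) S(1) finite_subset in auto)
  with card_S show ?thesis by simp
qed

theorem lemma1:
  fixes M :: "nat \<Rightarrow> nat \<Rightarrow> real" and eps :: real and n :: nat
  assumes eps_pos: "eps > 0"
    and nonneg: "\<And>i j. i \<ge> 1 \<Longrightarrow> j \<ge> 1 \<Longrightarrow> M i j \<ge> 0"
    and refl: "\<And>i. i \<ge> 1 \<Longrightarrow> M i i = 0"
    and sym: "\<And>i j. i \<ge> 1 \<Longrightarrow> j \<ge> 1 \<Longrightarrow> M i j = M j i"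
    and tri: "\<And>i j l. i \<ge> 1 \<Longrightarrow> j \<ge> 1 \<Longrightarrow> l \<ge> 1 \<Longrightarrow> M i j \<le> M i l + M l j"
  shows "covering_number M n eps \<le> macro_N M eps n
         \<and> macro_N M eps n \<le> covering_number M n (eps / 2)"
proof
  let ?T = "set (macro_taus M eps n)"
  have "\<forall>t\<in>{1..n+1}. \<exists>\<tau>\<in>?T. M t \<tau> \<le> eps"
    using macro_taus_covers[of M eps] refl eps_pos by simp
  then show "covering_number M n eps \<le> macro_N M eps n"
    using covering_number_le_card[OF macro_taus_subset] card_set_macro_taus by metis
  have separated: "2 * (eps / 2) < M a b" if "a \<in> ?T" "b \<in> ?T" "a \<noteq> b" for a b
  proof (cases "a < b")
    case True
    then show ?thesis using macro_taus_separated[OF that(1,2)] sym[of b a]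
      macro_taus_subset[of M eps n] that by auto
  next
    case False
    then show ?thesis using macro_taus_separated[OF that(2,1)] that(3) by simp
  qed
  show "macro_N M eps n \<le> covering_number M n (eps / 2)"
    using card_separated_le_covering_number[OF sym tri _ macro_taus_subset separated]
      refl eps_pos card_set_macro_taus by simp
qed

end
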